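(* Every finitely generated group is poly-ccc; that is, every finitely generated group $G$ admits a sequence of fair polytilings $(P_n)_{n\in\mathbb{N}}$ that is centered, cofinal, and coherent.
   Context: For a countable group $G$, a tuple $(T_1,\dots,T_k)$ of finite subsets of $G$, each containing $1_G$, is a polytile if there are non-empty sets $\Delta_1,\dots,\Delta_k\subseteq G$ with $G$ the disjoint union $\coprod_{1\le i\le k,\ \delta\in\Delta_i}\delta T_i$; then $P=(\Delta_1,\dots,\Delta_k;T_1,\dots,T_k)$ is a polytiling, and this partition of $G$ is the partition induced by $P$. The polytiling is fair if $|T_1|=\dots=|T_k|$. A sequence $P_n=(\Delta^n_1,\dots,\Delta^n_{k(n)};T^n_1,\dots,T^n_{k(n)})$ of polytilings is coherent if for each $n$ the partition induced by $P_n$ is finer than that induced by $P_{n+1}$; centered if $1_G\in\Delta_1^n$ for all $n$; cofinal if $T_1^n\subseteq T_1^{n+1}$ for all $n$ and $G=\bigcup_n T_1^n$. $G$ is poly-ccc if it admits a centered, cofinal, coherent sequence of fair polytilings. *)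

theory Defs
  imports "HOL-Algebra.Generated_Groups" "HOL-Algebra.Coset" "HOL-Library.Countable_Set"
begin

(* A k-tuple (T_0,...,T_{k-1}) of tiles with centre sets (Delta_0,...,Delta_{k-1}),
   indexed by i < k (0-based; the paper's T_1 is T 0). Tiles are left translates
   delta <# T i. *)
definition polytiling ::
  "('a, 'b) monoid_scheme \<Rightarrow> nat \<Rightarrow> (nat \<Rightarrow> 'a set) \<Rightarrow> (nat \<Rightarrow> 'a set) \<Rightarrow> bool" where
  "polytiling G k \<Delta> T \<longleftrightarrow>
     1 \<le> k \<and>
     (\<forall>i<k. finite (T i) \<and> T i \<subseteq> carrier G \<and> \<one>\<^bsub>G\<^esub> \<in> T i) \<and>
     (\<forall>i<k. \<Delta> i \<noteq> {} \<and> \<Delta> i \<subseteq> carrier G) \<and>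
     (\<forall>g\<in>carrier G. \<exists>!(i, \<delta>). i < k \<and> \<delta> \<in> \<Delta> i \<and> g \<in> \<delta> <#\<^bsub>G\<^esub> T i)"

definition fair_polytiling ::
  "('a, 'b) monoid_scheme \<Rightarrow> nat \<Rightarrow> (nat \<Rightarrow> 'a set) \<Rightarrow> (nat \<Rightarrow> 'a set) \<Rightarrow> bool" where
  "fair_polytiling G k \<Delta> T \<longleftrightarrow>
     polytiling G k \<Delta> T \<and> (\<forall>i<k. \<forall>j<k. card (T i) = card (T j))"

definition induced_partition ::
  "('a, 'b) monoid_scheme \<Rightarrow> nat \<Rightarrow> (nat \<Rightarrow> 'a set) \<Rightarrow> (nat \<Rightarrow> 'a set) \<Rightarrow> 'a set set" where
  "induced_partition G k \<Delta> T = {\<delta> <#\<^bsub>G\<^esub> T i | i \<delta>. i < k \<and> \<delta> \<in> \<Delta> i}"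

definition finer :: "'a set set \<Rightarrow> 'a set set \<Rightarrow> bool" where
  "finer P Q \<longleftrightarrow> (\<forall>A\<in>P. \<exists>B\<in>Q. A \<subseteq> B)"

definition poly_ccc :: "('a, 'b) monoid_scheme \<Rightarrow> bool" where
  "poly_ccc G \<longleftrightarrow> countable (carrier G) \<and>
     (\<exists>(k :: nat \<Rightarrow> nat) (\<Delta> :: nat \<Rightarrow> nat \<Rightarrow> 'a set) (T :: nat \<Rightarrow> nat \<Rightarrow> 'a set).
        (\<forall>n. fair_polytiling G (k n) (\<Delta> n) (T n)) \<and>
        (\<forall>n. finer (induced_partition G (k n) (\<Delta> n) (T n))
                    (induced_partition G (k (Suc n)) (\<Delta> (Suc n)) (T (Suc n)))) \<and>
        (\<forall>n. \<one>\<^bsub>G\<^esub> \<in> \<Delta> n 0) \<and>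
        (\<forall>n. T n 0 \<subseteq> T (Suc n) 0) \<and> (\<Union>n. T n 0) = carrier G)"

definition finitely_generated :: "('a, 'b) monoid_scheme \<Rightarrow> bool" where
  "finitely_generated G \<longleftrightarrow>
     (\<exists>S. finite S \<and> S \<subseteq> carrier G \<and> generate G S = carrier G)"

end

theory Submission
  imports Defs
begin

text \<open>A finite symmetric generating set turns \<open>G\<close> into a connected, locally finite Cayley
  graph. Call a partition of \<open>G\<close> into blocks of equal size and bounded diameter an
  equipartition. Translating each block so that it contains \<open>\<one>\<close> lands it in a fixed finite
  ball, so only finitely many shapes occur and every equipartition is induced by a fair polytiling
  whose first tile is the block of \<open>\<one>\<close>.

  Equipartitions can be coarsened. The blocks themselves form a connected, locally finite graph;
  choose a spanning tree in which all blocks near the block of \<open>\<one>\<close> are leaves attached to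
  it. Following Sekanina, every finite subtree has a traversal whose consecutive vertices are at
  distance at most 3; stringing these traversals along rays to infinity cuts an infinite, locally
  finite tree into sets of exactly \<open>c\<close> vertices of diameter at most \<open>3 c\<close>, for every large
  \<open>c\<close>, one of them containing the root together with its leaf children. The unions of the blocks
  in each set form a coarser equipartition whose block of \<open>\<one>\<close> contains a prescribed ball.
  Starting from singletons and letting the radius grow gives the required sequence of polytilings;
  a finite group is simply tiled by itself.\<close>

lemma relpow_extend_loop:
  assumes "(x,y) \<in> R ^^ a" and "(y,y) \<in> R" and "a \<le> b"
  shows "(x,y) \<in> R ^^ b"
proof -
  have "(y,y) \<in> R ^^ k" for k
    by (induction k) (auto intro: relpow_Suc_I assms(2))
  then have "(x,y) \<in> R ^^ (a + (b - a))"
    using assms(1) relpow_trans by fast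
  then show ?thesis
    using assms(3) by simp
qed

lemma sym_relpow:
  assumes "sym R"
  shows "sym (R ^^ n)"
proof (induction n)
  case (Suc n)
  show ?case
  proof (rule symI)
    fix x y assume "(x,y) \<in> R ^^ Suc n"
    then obtain z where "(x,z) \<in> R ^^ n" "(z,y) \<in> R"
      by (rule relpow_Suc_E)
    then show "(y,x) \<in> R ^^ Suc n"
      using Suc.IH assms by (blast intro: relpow_Suc_I2 dest: symD)
  qed
qed (simp add: sym_Id)

lemma relpow_mult_subset:
  fixes R :: "('a \<times> 'a) set"
  assumes "R \<subseteq> S ^^ a"
  shows "R ^^ n \<subseteq> S ^^ (n * a)"
proof (induction n)
  case (Suc n)
  have "R ^^ Suc n = R ^^ n O R"
    by simp
  also have "\<dots> \<subseteq> S ^^ (n * a) O S ^^ a"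
    using Suc.IH assms by (rule relcomp_mono)
  also have "\<dots> = S ^^ (Suc n * a)"
    by (metis relpow_add add.commute mult_Suc)
  finally show ?case .
qed simp

lemma successively_concat:
  assumes "\<forall>xs\<in>set xss. xs \<noteq> [] \<and> successively R xs"
    and "successively (\<lambda>xs ys. R (last xs) (hd ys)) xss"
  shows "successively R (concat xss)"
  using assms
proof (induction xss)
  case (Cons xs xss)
  show ?case
  proof (cases xss)
    case (Cons ys yss)
    then have "successively R (concat xss)" "concat xss \<noteq> []" "hd (concat xss) = hd ys"
      using Cons.IH Cons.prems by (simp_all add: successively_Cons)
    then show ?thesis
      using Cons.prems \<open>xss = ys # yss\<close> by (simp add: successively_append_iff)
  qed (use Cons in simp)
qed simp

lemma successively_concat_map:
  assumes "\<forall>x\<in>set xs. F x \<noteq> [] \<and> successively R (F x)"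
    and "\<forall>x\<in>set xs. \<forall>y\<in>set xs. R (last (F x)) (hd (F y))"
  shows "successively R (concat (map F xs))"
proof (rule successively_concat)
  have "sorted_wrt (\<lambda>x y. R (last (F x)) (hd (F y))) xs"
    using assms(2) by (induction xs) auto
  then show "successively (\<lambda>xs ys. R (last xs) (hd ys)) (map F xs)"
    unfolding successively_map by (rule successively_if_sorted_wrt)
qed (use assms(1) in auto)

lemma last_concat_map:
  "xs \<noteq> [] \<Longrightarrow> \<forall>x\<in>set xs. F x \<noteq> [] \<Longrightarrow> last (concat (map F xs)) = last (F (last xs))"
  by (induction xs rule: induct_list012) auto

section \<open>Partitioning a locally finite tree into sets of bounded diameter\<close>

locale rooted_tree =
  fixes X :: "'x set" and r :: 'x and p :: "'x \<Rightarrow> 'x" and depth :: "'x \<Rightarrow> nat"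
  assumes root_in: "r \<in> X"
    and parent: "\<And>v. v \<in> X \<Longrightarrow> v \<noteq> r \<Longrightarrow> p v \<in> X \<and> Suc (depth (p v)) = depth v"
    and depth_root: "depth r = 0"
    and finite_children: "\<And>v. v \<in> X \<Longrightarrow> finite {w \<in> X. w \<noteq> r \<and> p w = v}"
    and infinite_vertices: "infinite X"
begin

definition children :: "'x \<Rightarrow> 'x set" where
  "children v = {w \<in> X. w \<noteq> r \<and> p w = v}"

definition subtree :: "'x \<Rightarrow> 'x set" where
  "subtree v = {u \<in> X. depth v \<le> depth u \<and> (p ^^ (depth u - depth v)) u = v}"

text \<open>Reflexive, so that paths can be padded to any longer length.\<close>

definition adj :: "('x \<times> 'x) set" where
  "adj = {(x,y). x \<in> X \<and> y \<in> X \<and> (x = y \<or> (x \<noteq> r \<and> p x = y) \<or> (y \<noteq> r \<and> p y = x))}"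

definition near :: "'x \<Rightarrow> 'x \<Rightarrow> bool" where
  "near x y \<longleftrightarrow> (x,y) \<in> adj ^^ 3"

lemma depth_0_imp_root: "v \<in> X \<Longrightarrow> depth v = 0 \<Longrightarrow> v = r"
  using parent by fastforce

lemma childrenD:
  "w \<in> children v \<Longrightarrow> w \<in> X \<and> w \<noteq> r \<and> p w = v \<and> v \<in> X \<and> depth w = Suc (depth v)"
  unfolding children_def using parent by auto

lemma child_of_parent: "u \<in> X \<Longrightarrow> u \<noteq> r \<Longrightarrow> u \<in> children (p u)"
  unfolding children_def by simp

lemma adj_sym: "(x,y) \<in> adj \<Longrightarrow> (y,x) \<in> adj"
  unfolding adj_def by auto

lemma sym_adj: "sym adj"
  by (auto intro: symI adj_sym)

lemma adj_refl: "x \<in> X \<Longrightarrow> (x,x) \<in> adj"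
  unfolding adj_def by auto

lemma adj_child: "w \<in> children v \<Longrightarrow> (v,w) \<in> adj \<and> (w,v) \<in> adj"
  using childrenD unfolding adj_def by auto

lemma adjD: "(x,y) \<in> adj \<Longrightarrow> x \<in> X \<and> y \<in> X"
  unfolding adj_def by auto

lemma nearI: "(a,b) \<in> adj \<Longrightarrow> (b,c) \<in> adj \<Longrightarrow> (c,d) \<in> adj \<Longrightarrow> near a d"
  unfolding near_def numeral_3_eq_3 by (meson relpow_0_I relpow_Suc_I)

lemma nearI2: "(a,b) \<in> adj \<Longrightarrow> (b,c) \<in> adj \<Longrightarrow> near a c"
  using nearI adj_refl adjD by blast

lemma near_sym: "near x y \<Longrightarrow> near y x"
  unfolding near_def using sym_relpow[OF sym_adj] by (auto dest: symD)

lemma parent_pow: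
  "u \<in> X \<Longrightarrow> k \<le> depth u \<Longrightarrow> (p ^^ k) u \<in> X \<and> depth ((p ^^ k) u) = depth u - k"
proof (induction k)
  case (Suc k)
  then have h: "(p ^^ k) u \<in> X" "depth ((p ^^ k) u) = depth u - k"
    by auto
  then have "(p ^^ k) u \<noteq> r"
    using Suc.prems depth_root by auto
  then show ?case
    using parent[OF h(1)] h by auto
qed simp

lemma subtree_self: "v \<in> X \<Longrightarrow> v \<in> subtree v"
  unfolding subtree_def by auto

lemma subtreeD:
  assumes "u \<in> subtree v"
  shows "u \<in> X \<and> v \<in> X \<and> depth v \<le> depth u \<and> (p ^^ (depth u - depth v)) u = v"
  using assms parent_pow[of u "depth u - depth v"] unfolding subtree_def by auto

lemma subtree_trans:
  assumes "u \<in> subtree w" and "w \<in> subtree v"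
  shows "u \<in> subtree v"
proof -
  have u: "u \<in> X" "depth w \<le> depth u" "(p ^^ (depth u - depth w)) u = w"
    using subtreeD[OF assms(1)] by auto
  have w: "depth v \<le> depth w" "(p ^^ (depth w - depth v)) w = v"
    using subtreeD[OF assms(2)] by auto
  have "depth u - depth v = (depth w - depth v) + (depth u - depth w)"
    using u w by simp
  then have "(p ^^ (depth u - depth v)) u = (p ^^ (depth w - depth v)) ((p ^^ (depth u - depth w)) u)"
    by (simp only: funpow_add o_apply)
  then show ?thesis
    using u w unfolding subtree_def by simp
qed

lemma child_in_subtree: "w \<in> children v \<Longrightarrow> w \<in> subtree v"
  using childrenD unfolding subtree_def by auto

lemma subtree_child_subset: "w \<in> children v \<Longrightarrow> subtree w \<subseteq> subtree v"
  using child_in_subtree subtree_trans by blast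

lemma parent_notin_subtree_child: "w \<in> children v \<Longrightarrow> v \<notin> subtree w"
  using childrenD subtreeD by fastforce

lemma finite_subtree_subtree: "u \<in> subtree w \<Longrightarrow> finite (subtree w) \<Longrightarrow> finite (subtree u)"
  using subtree_trans finite_subset by (metis subsetI)

lemma subtree_comparable:
  assumes "u \<in> subtree a" and "u \<in> subtree b" and "depth a \<le> depth b"
  shows "b \<in> subtree a"
proof -
  have a: "depth a \<le> depth u" "(p ^^ (depth u - depth a)) u = a"
    using subtreeD[OF assms(1)] by auto
  have b: "b \<in> X" "depth b \<le> depth u" "(p ^^ (depth u - depth b)) u = b"
    using subtreeD[OF assms(2)] by auto
  have "depth u - depth a = (depth b - depth a) + (depth u - depth b)"
    using a b assms(3) by simp
  then have "(p ^^ (depth u - depth a)) u = (p ^^ (depth b - depth a)) ((p ^^ (depth u - depth b)) u)"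
    by (simp only: funpow_add o_apply)
  then have "(p ^^ (depth b - depth a)) b = (p ^^ (depth u - depth a)) u"
    using b(3) by simp
  then show ?thesis
    using a b assms(3) unfolding subtree_def by simp
qed

lemma subtree_same_depth: "u \<in> subtree v \<Longrightarrow> depth u = depth v \<Longrightarrow> u = v"
  using subtreeD by fastforce

lemma ancestors_same_depth:
  "u \<in> subtree a \<Longrightarrow> u \<in> subtree b \<Longrightarrow> depth a = depth b \<Longrightarrow> a = b"
  using subtree_comparable[of u a b] subtree_same_depth by fastforce

lemma subtree_in_child_subtree:
  assumes "u \<in> subtree v" and "u \<noteq> v"
  shows "\<exists>w\<in>children v. u \<in> subtree w"
proof -
  have u: "u \<in> X" and lt: "depth v < depth u"
    using assms subtreeD subtree_same_depth by fastforce+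
  define w where "w = (p ^^ (depth u - depth v - 1)) u"
  have w: "w \<in> X" "depth w = Suc (depth v)"
    using parent_pow[OF u, of "depth u - depth v - 1"] lt unfolding w_def by auto
  have "p w = (p ^^ Suc (depth u - depth v - 1)) u"
    unfolding w_def by simp
  also have "Suc (depth u - depth v - 1) = depth u - depth v"
    using lt by simp
  finally have "p w = (p ^^ (depth u - depth v)) u" .
  then have "w \<in> children v"
    using assms(1) w depth_root subtreeD unfolding children_def by auto
  moreover have "u \<in> subtree w"
    using u w lt unfolding subtree_def w_def by simp
  ultimately show ?thesis
    by blast
qed

lemma subtree_unfold:
  assumes "v \<in> X"
  shows "subtree v = insert v (\<Union>w\<in>children v. subtree w)"
proof
  show "subtree v \<subseteq> insert v (\<Union>w\<in>children v. subtree w)"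
    using subtree_in_child_subtree by fastforce
  show "insert v (\<Union>w\<in>children v. subtree w) \<subseteq> subtree v"
    using subtree_self[OF assms] subtree_child_subset by auto
qed

lemma subtree_children_disjoint:
  "w \<in> children v \<Longrightarrow> w' \<in> children v \<Longrightarrow> w \<noteq> w' \<Longrightarrow> subtree w \<inter> subtree w' = {}"
  using ancestors_same_depth childrenD by fastforce

lemma subtree_root: "u \<in> X \<Longrightarrow> u \<in> subtree r"
  using parent_pow[of u "depth u"] depth_0_imp_root depth_root unfolding subtree_def by auto

lemma card_subtree_child_less:
  assumes "v \<in> X" and "finite (subtree v)" and "w \<in> children v"
  shows "card (subtree w) < card (subtree v)"
proof (rule psubset_card_mono)
  show "subtree w \<subset> subtree v"
    using parent_notin_subtree_child[OF assms(3)] subtree_self[OF assms(1)]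
      subtree_child_subset[OF assms(3)] by blast
qed (fact assms(2))

definition core :: "'x \<Rightarrow> bool" where
  "core v \<longleftrightarrow> v \<in> X \<and> infinite (subtree v)"

lemma core_child:
  assumes "core v"
  shows "\<exists>w\<in>children v. core w"
proof (rule ccontr)
  assume "\<not> (\<exists>w\<in>children v. core w)"
  then have "\<forall>w\<in>children v. finite (subtree w)"
    using childrenD unfolding core_def by auto
  moreover have "finite (children v)"
    using assms finite_children unfolding core_def children_def by auto
  ultimately have "finite (subtree v)"
    using subtree_unfold assms unfolding core_def by simp
  then show False
    using assms unfolding core_def by simp
qed

lemma core_root: "core r"
proof -
  have "X \<subseteq> subtree r"
    using subtree_root by blast
  then show ?thesis
    using infinite_vertices finite_subset root_in unfolding core_def by blast
qed

lemma core_ancestor: "u \<in> subtree v \<Longrightarrow> core u \<Longrightarrow> core v"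
  using finite_subtree_subtree subtreeD unfolding core_def by blast

lemma core_deeper_than_finite_subtree:
  assumes "core c" and "u \<in> subtree c" and "u \<in> subtree w" and "finite (subtree w)"
  shows "depth c < depth w"
proof (rule ccontr)
  assume "\<not> depth c < depth w"
  then have "c \<in> subtree w"
    using subtree_comparable[OF assms(3,2)] by simp
  then have "finite (subtree c)"
    using assms(4) by (rule finite_subtree_subtree)
  then show False
    using assms(1) unfolding core_def by simp
qed

definition children_list :: "'x \<Rightarrow> 'x list" where
  "children_list v = (SOME ws. distinct ws \<and> set ws = children v)"

lemma children_list: "v \<in> X \<Longrightarrow> distinct (children_list v) \<and> set (children_list v) = children v"
  unfolding children_list_def
  by (rule someI_ex) (metis finite_distinct_list finite_children children_def)

definition near_path :: "'x list \<Rightarrow> bool" where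
  "near_path xs \<longleftrightarrow> distinct xs \<and> successively near xs"

lemma near_path_rev: "near_path (rev xs) \<longleftrightarrow> near_path xs"
proof -
  have "successively (\<lambda>x y. near y x) xs \<longleftrightarrow> successively near xs"
    using near_sym by (metis successively_mono)
  then show ?thesis
    unfolding near_path_def by simp
qed

text \<open>Consecutive traversals meet through \<open>v\<close>: one ends at the child \<open>w\<close>, the next starts
  adjacent to a sibling \<open>w'\<close>, so the hop \<open>w, v, w', \<dots>\<close> has length 3.\<close>

lemma near_path_Cons_concat:
  assumes v: "v \<in> X" and ws: "distinct ws" "set ws \<subseteq> children v"
    and F: "\<And>w. w \<in> set ws \<Longrightarrow>
      set (F w) = subtree w \<and> near_path (F w) \<and> last (F w) = w \<and> (w, hd (F w)) \<in> adj"
  defines "L \<equiv> v # concat (map F ws)"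
  shows "set L = insert v (\<Union>w\<in>set ws. subtree w) \<and> near_path L \<and> (v, last L) \<in> adj"
proof -
  have ne: "F w \<noteq> []" if "w \<in> set ws" for w
    using F[OF that] subtree_self ws(2) childrenD that by fastforce
  have set_concat: "set (concat (map F ws)) = (\<Union>w\<in>set ws. subtree w)"
    using F by auto
  have "distinct (concat (map F ws))"
    using ws F subtree_children_disjoint
    by (induction ws) (auto simp: near_path_def, blast)
  moreover have "v \<notin> set (concat (map F ws))"
    using set_concat ws(2) parent_notin_subtree_child by auto
  moreover have "successively near (concat (map F ws))"
  proof (rule successively_concat_map)
    show "\<forall>a\<in>set ws. \<forall>b\<in>set ws. near (last (F a)) (hd (F b))"
    proof (intro ballI)
      fix a b assume "a \<in> set ws" "b \<in> set ws"
      then have "(last (F a), v) \<in> adj" "(v, b) \<in> adj" "(b, hd (F b)) \<in> adj"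
        using F ws(2) adj_child by auto
      then show "near (last (F a)) (hd (F b))"
        by (rule nearI)
    qed
  qed (use F ne near_path_def in auto)
  moreover have "(v, last L) \<in> adj \<and> (ws \<noteq> [] \<longrightarrow> near v (hd (concat (map F ws))))"
  proof (cases ws)
    case (Cons w ws')
    have "hd (concat (map F ws)) = hd (F w)" "last L = last ws"
      using Cons ne F last_concat_map[of ws F] unfolding L_def by auto
    moreover have "last ws \<in> children v"
      using Cons ws(2) by (metis last_in_set list.distinct(1) subsetD)
    moreover have "(v, w) \<in> adj" "(w, hd (F w)) \<in> adj"
      using Cons ws(2) adj_child F[of w] by auto
    ultimately show ?thesis
      using nearI2 adj_child by auto
  qed (use v adj_refl L_def in simp)
  ultimately show ?thesis
    using set_concat ne unfolding L_def near_path_def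
    by (cases ws) (auto simp: successively_Cons)
qed

text \<open>Sekanina's traversal of a finite subtree; the fuel \<open>n\<close> only has to be at least the size
  of the subtree.\<close>

primrec tour :: "nat \<Rightarrow> 'x \<Rightarrow> 'x list" where
  "tour 0 v = [v]"
| "tour (Suc n) v = v # concat (map (rev \<circ> tour n) (children_list v))"

lemma tour:
  assumes "v \<in> X" and "finite (subtree v)" and "card (subtree v) \<le> n"
  shows "set (tour n v) = subtree v \<and> near_path (tour n v) \<and> hd (tour n v) = v
    \<and> (v, last (tour n v)) \<in> adj"
  using assms
proof (induction n arbitrary: v)
  case 0
  then show ?case
    using subtree_self card_gt_0_iff by fastforce
next
  case (Suc n)
  have child: "w \<in> X \<and> finite (subtree w) \<and> card (subtree w) \<le> n" if "w \<in> children v" for w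
    using card_subtree_child_less[OF Suc.prems(1,2) that] Suc.prems
      subtree_child_subset[OF that] finite_subset childrenD that by fastforce
  have cl: "distinct (children_list v)" "set (children_list v) = children v"
    using children_list Suc.prems(1) by auto
  have "set ((rev \<circ> tour n) w) = subtree w \<and> near_path ((rev \<circ> tour n) w)
      \<and> last ((rev \<circ> tour n) w) = w \<and> (w, hd ((rev \<circ> tour n) w)) \<in> adj"
    if "w \<in> set (children_list v)" for w
  proof -
    have "set (tour n w) = subtree w \<and> near_path (tour n w) \<and> hd (tour n w) = w
        \<and> (w, last (tour n w)) \<in> adj"
      using Suc.IH child that cl by blast
    moreover have "tour n w \<noteq> []"
      using calculation subtree_self child that cl by fastforce
    ultimately show ?thesis
      using near_path_rev by (simp add: hd_rev last_rev)
  qed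
  from near_path_Cons_concat[OF Suc.prems(1) cl(1) _ this]
  have "set (tour (Suc n) v) = insert v (\<Union>w\<in>set (children_list v). subtree w)
      \<and> near_path (tour (Suc n) v) \<and> (v, last (tour (Suc n) v)) \<in> adj"
    unfolding tour.simps(2) using cl(2) by (simp only: order_refl)
  then show ?case
    using subtree_unfold[OF Suc.prems(1)] cl(2) by simp
qed

definition cluster :: "'x \<Rightarrow> 'x list" where
  "cluster v = v # concat (map (\<lambda>w. rev (tour (card (subtree w)) w))
    (filter (\<lambda>w. finite (subtree w)) (children_list v)))"

lemma cluster_props:
  assumes "v \<in> X"
  shows "set (cluster v) = insert v (\<Union>w\<in>{w \<in> children v. finite (subtree w)}. subtree w)
    \<and> near_path (cluster v) \<and> (v, last (cluster v)) \<in> adj"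
proof -
  let ?ws = "filter (\<lambda>w. finite (subtree w)) (children_list v)"
  have ws: "distinct ?ws" "set ?ws = {w \<in> children v. finite (subtree w)}"
    using children_list[OF assms] by auto
  have "set (rev (tour (card (subtree w)) w)) = subtree w
      \<and> near_path (rev (tour (card (subtree w)) w)) \<and> last (rev (tour (card (subtree w)) w)) = w
      \<and> (w, hd (rev (tour (card (subtree w)) w))) \<in> adj" if "w \<in> set ?ws" for w
  proof -
    have w: "w \<in> X" "finite (subtree w)"
      using that ws childrenD by auto
    then have "tour (card (subtree w)) w \<noteq> []"
      using tour[OF w] subtree_self by fastforce
    then show ?thesis
      using tour[OF w order_refl] near_path_rev by (simp add: hd_rev last_rev)
  qed
  from near_path_Cons_concat[OF assms ws(1) _ this]
  have "set (cluster v) = insert v (\<Union>w\<in>set ?ws. subtree w) \<and> near_path (cluster v)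
      \<and> (v, last (cluster v)) \<in> adj"
    unfolding cluster_def using ws(2) by blast
  then show ?thesis
    by (simp only: ws(2))
qed

lemma cluster_subset:
  assumes "v \<in> X"
  shows "set (cluster v) \<subseteq> X"
proof -
  have "set (cluster v) = insert v (\<Union>w\<in>{w \<in> children v. finite (subtree w)}. subtree w)"
    using cluster_props[OF assms] by blast
  then show ?thesis
    using assms subtreeD by auto
qed

lemma hd_cluster: "hd (cluster v) = v"
  unfolding cluster_def by simp

lemma cluster_cases:
  "u \<in> set (cluster a) \<Longrightarrow> a \<in> X \<Longrightarrow>
    u = a \<or> (\<exists>w\<in>children a. finite (subtree w) \<and> u \<in> subtree w)"
  using cluster_props[of a] by auto

text \<open>A vertex lies in the cluster of its deepest ancestor in the core.\<close>

lemma clusters_disjoint: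
  assumes a: "core a" and b: "core b" and "a \<noteq> b"
  shows "set (cluster a) \<inter> set (cluster b) = {}"
proof (rule ccontr)
  assume "set (cluster a) \<inter> set (cluster b) \<noteq> {}"
  then obtain u where u: "u \<in> set (cluster a)" "u \<in> set (cluster b)"
    by blast
  have ua: "u \<in> subtree a" and ub: "u \<in> subtree b"
    using u cluster_cases a b subtree_self subtree_child_subset unfolding core_def by blast+
  have "depth a < Suc (depth b)"
  proof (cases "u = b")
    case True
    then show ?thesis
      using subtreeD[OF ua] by simp
  next
    case False
    then obtain w where "w \<in> children b" "finite (subtree w)" "u \<in> subtree w"
      using cluster_cases[OF u(2)] b unfolding core_def by blast
    then show ?thesis
      using core_deeper_than_finite_subtree[OF a ua] childrenD by fastforce
  qed
  moreover have "depth b < Suc (depth a)"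
  proof (cases "u = a")
    case True
    then show ?thesis
      using subtreeD[OF ub] by simp
  next
    case False
    then obtain w where "w \<in> children a" "finite (subtree w)" "u \<in> subtree w"
      using cluster_cases[OF u(1)] a unfolding core_def by blast
    then show ?thesis
      using core_deeper_than_finite_subtree[OF b ub] childrenD by fastforce
  qed
  ultimately have "a = b"
    using ancestors_same_depth[OF ua ub] by simp
  with \<open>a \<noteq> b\<close> show False ..
qed

lemma in_some_cluster:
  assumes "u \<in> X"
  shows "\<exists>a. core a \<and> u \<in> set (cluster a)"
  using assms
proof (induction "depth u" arbitrary: u rule: less_induct)
  case less
  show ?case
  proof (cases "core u")
    case True
    then show ?thesis
      using hd_cluster by (metis list.set_sel(1) cluster_def list.distinct(1))
  next
    case False
    then have "u \<noteq> r" "finite (subtree u)"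
      using core_root less.prems unfolding core_def by auto
    then have pu: "p u \<in> X" "depth (p u) < depth u" "u \<in> children (p u)"
      using parent less.prems child_of_parent by fastforce+
    then obtain a where a: "core a" "p u \<in> set (cluster a)"
      using less.hyps by blast
    then have "a \<in> X"
      unfolding core_def by simp
    have "\<exists>w\<in>children a. finite (subtree w) \<and> u \<in> subtree w"
    proof (cases "p u = a")
      case True
      then show ?thesis
        using pu(3) \<open>finite (subtree u)\<close> less.prems subtree_self by blast
    next
      case False
      then obtain w where "w \<in> children a" "finite (subtree w)" "p u \<in> subtree w"
        using cluster_cases[OF a(2) \<open>a \<in> X\<close>] by blast
      then show ?thesis
        using subtree_trans child_in_subtree[OF pu(3)] by blast
    qed
    then show ?thesis
      using cluster_props[OF \<open>a \<in> X\<close>] a(1) by blast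
  qed
qed

definition next_core :: "'x \<Rightarrow> 'x" where
  "next_core v = (SOME w. w \<in> children v \<and> core w)"

lemma next_core: "core v \<Longrightarrow> next_core v \<in> children v \<and> core (next_core v)"
  unfolding next_core_def using core_child by (metis (mono_tags, lifting) someI_ex)

lemma next_core_pow:
  assumes "core s"
  shows "core ((next_core ^^ j) s) \<and> depth ((next_core ^^ j) s) = depth s + j"
proof (induction j)
  case (Suc j)
  then show ?case
    using next_core[of "(next_core ^^ j) s"] childrenD by auto
qed (simp add: assms)

lemma parent_pow_next_core_pow:
  assumes "core s"
  shows "(p ^^ j) ((next_core ^^ j) s) = s"
proof (induction j)
  case (Suc j)
  have "p (next_core ((next_core ^^ j) s)) = (next_core ^^ j) s"
    using next_core next_core_pow[OF assms] childrenD by blast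
  moreover have "(p ^^ Suc j) x = (p ^^ j) (p x)" for x
    by (simp only: funpow_Suc_right o_apply)
  ultimately have "(p ^^ Suc j) ((next_core ^^ Suc j) s) = (p ^^ j) ((next_core ^^ j) s)"
    by simp
  then show ?case
    using Suc by simp
qed simp

text \<open>Every core vertex lies on exactly one ray \<open>s, next_core s, next_core (next_core s), \<dots>\<close>
  starting at a core vertex that is not itself chosen by \<open>next_core\<close>.\<close>

definition ray_starts :: "'x set" where
  "ray_starts = {s. core s \<and> (s = r \<or> next_core (p s) \<noteq> s)}"

lemma ray_starts_unique_le:
  assumes s: "s \<in> ray_starts" and s': "s' \<in> ray_starts"
    and eq: "(next_core ^^ j) s = (next_core ^^ j') s'" and "j \<le> j'"
  shows "s = s' \<and> j = j'"
proof -
  have cs: "core s" "core s'"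
    using s s' unfolding ray_starts_def by auto
  let ?q = "(next_core ^^ (j' - j)) s'"
  have "(next_core ^^ j') s' = (next_core ^^ (j + (j' - j))) s'"
    using \<open>j \<le> j'\<close> by simp
  then have q: "(next_core ^^ j) s = (next_core ^^ j) ?q"
    using eq by (simp only: funpow_add o_apply)
  have "core ?q"
    using next_core_pow cs(2) by blast
  have "s = (p ^^ j) ((next_core ^^ j) s)"
    using parent_pow_next_core_pow[OF cs(1)] by simp
  also have "\<dots> = ?q"
    unfolding q using parent_pow_next_core_pow[OF \<open>core ?q\<close>] .
  finally have "s = ?q" .
  show ?thesis
  proof (cases "j' - j")
    case (Suc m)
    let ?a = "(next_core ^^ m) s'"
    have "s = next_core ?a" "core ?a"
      using \<open>s = ?q\<close> Suc next_core_pow cs by auto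
    then have "s \<noteq> r" "next_core (p s) = s"
      using next_core[of ?a] childrenD by auto
    then show ?thesis
      using s unfolding ray_starts_def by simp
  qed (use \<open>s = ?q\<close> \<open>j \<le> j'\<close> in simp)
qed

lemma ray_starts_unique:
  "s \<in> ray_starts \<Longrightarrow> s' \<in> ray_starts \<Longrightarrow> (next_core ^^ j) s = (next_core ^^ j') s' \<Longrightarrow>
    s = s' \<and> j = j'"
  using ray_starts_unique_le by (metis nat_le_linear)

lemma core_on_ray: "core a \<Longrightarrow> \<exists>s\<in>ray_starts. \<exists>j. (next_core ^^ j) s = a"
proof (induction "depth a" arbitrary: a rule: less_induct)
  case less
  show ?case
  proof (cases "a \<in> ray_starts")
    case True
    then show ?thesis
      by (intro bexI[of _ a] exI[of _ 0]) simp_all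
  next
    case False
    then have "a \<noteq> r" and a: "next_core (p a) = a"
      using less.prems unfolding ray_starts_def by auto
    then have pa: "a \<in> children (p a)"
      using less.prems child_of_parent unfolding core_def by blast
    have "core (p a)"
      using core_ancestor[OF child_in_subtree[OF pa] less.prems] .
    moreover have "depth (p a) < depth a"
      using childrenD[OF pa] by simp
    ultimately obtain s j where "s \<in> ray_starts" "(next_core ^^ j) s = p a"
      using less.hyps by blast
    then have "(next_core ^^ Suc j) s = a"
      using a by simp
    with \<open>s \<in> ray_starts\<close> show ?thesis
      by blast
  qed
qed

definition ray_prefix :: "'x \<Rightarrow> nat \<Rightarrow> 'x list" where
  "ray_prefix s k = concat (map (\<lambda>j. cluster ((next_core ^^ j) s)) [0..<k])"

definition ray_enum :: "'x \<Rightarrow> nat \<Rightarrow> 'x" where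
  "ray_enum s i = ray_prefix s (Suc i) ! i"

lemma ray_prefix_Suc: "ray_prefix s (Suc k) = ray_prefix s k @ cluster ((next_core ^^ k) s)"
  unfolding ray_prefix_def by simp

lemma set_ray_prefix: "set (ray_prefix s k) = (\<Union>j<k. set (cluster ((next_core ^^ j) s)))"
  by (induction k) (auto simp: ray_prefix_def lessThan_Suc)

lemma length_ray_prefix: "k \<le> length (ray_prefix s k)"
  by (induction k) (simp_all add: ray_prefix_Suc cluster_def)

lemma ray_prefix_extends: "\<exists>ys. ray_prefix s (k + d) = ray_prefix s k @ ys"
  by (induction d) (auto simp: ray_prefix_Suc)

lemma nth_ray_prefix_mono:
  assumes "k \<le> k'" and "i < length (ray_prefix s k)"
  shows "ray_prefix s k' ! i = ray_prefix s k ! i"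
proof -
  obtain ys where "ray_prefix s (k + (k' - k)) = ray_prefix s k @ ys"
    using ray_prefix_extends by blast
  then show ?thesis
    using assms by (simp add: nth_append)
qed

lemma ray_enum_eq_nth:
  assumes "i < length (ray_prefix s k)"
  shows "ray_enum s i = ray_prefix s k ! i"
proof (cases "k \<le> Suc i")
  case True
  then show ?thesis
    unfolding ray_enum_def using nth_ray_prefix_mono[OF True assms] by simp
next
  case False
  moreover have "i < length (ray_prefix s (Suc i))"
    using length_ray_prefix[of "Suc i" s] by simp
  ultimately show ?thesis
    unfolding ray_enum_def using nth_ray_prefix_mono[of "Suc i" k i s] by simp
qed

lemma ray_enum_in_prefix: "ray_enum s i \<in> set (ray_prefix s (Suc i))"
  unfolding ray_enum_def using length_ray_prefix[of "Suc i" s] by simp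

lemma ray_enum_in:
  assumes "core s"
  shows "ray_enum s i \<in> X"
proof -
  obtain j where "ray_enum s i \<in> set (cluster ((next_core ^^ j) s))"
    using ray_enum_in_prefix[of s i] unfolding set_ray_prefix by blast
  moreover have "(next_core ^^ j) s \<in> X"
    using next_core_pow[OF assms] unfolding core_def by blast
  ultimately show ?thesis
    using cluster_subset by blast
qed

lemma near_path_ray_prefix:
  assumes "core s"
  shows "near_path (ray_prefix s k)"
proof (induction k)
  case (Suc k)
  note IH = Suc.IH
  let ?c = "\<lambda>j. (next_core ^^ j) s"
  have c: "core (?c j)" "?c j \<in> X" for j
    using next_core_pow[OF assms] unfolding core_def by blast+
  have "set (cluster (?c j)) \<inter> set (cluster (?c k)) = {}" if "j < k" for j
  proof (rule clusters_disjoint[OF c(1) c(1)])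
    show "?c j \<noteq> ?c k"
      using next_core_pow[OF assms, of j] next_core_pow[OF assms, of k] that by auto
  qed
  then have disj: "set (ray_prefix s k) \<inter> set (cluster (?c k)) = {}"
    unfolding set_ray_prefix by blast
  have np: "near_path (cluster (?c k))"
    using cluster_props[OF c(2)] by blast
  show ?case
  proof (cases k)
    case 0
    then show ?thesis
      using np by (simp add: ray_prefix_def)
  next
    case (Suc k')
    have "ray_prefix s k \<noteq> []"
      using length_ray_prefix[of k s] Suc by auto
    have "last (ray_prefix s k) = last (cluster (?c k'))"
      using Suc by (simp add: ray_prefix_Suc cluster_def)
    moreover have "(last (cluster (?c k')), ?c k') \<in> adj"
      using cluster_props[OF c(2)] adj_sym by blast
    moreover have "(?c k', ?c k) \<in> adj"
      using next_core[OF c(1)] adj_child Suc by auto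
    ultimately have "near (last (ray_prefix s k)) (hd (cluster (?c k)))"
      using nearI2 hd_cluster by simp
    then show ?thesis
      using IH disj np \<open>ray_prefix s k \<noteq> []\<close> unfolding near_path_def
      by (simp add: ray_prefix_Suc successively_append_iff)
  qed
qed (simp add: ray_prefix_def near_path_def)

lemma ray_enum_inj:
  assumes "core s" and "ray_enum s i = ray_enum s i'"
  shows "i = i'"
proof -
  let ?k = "Suc (max i i')"
  have len: "i < length (ray_prefix s ?k)" "i' < length (ray_prefix s ?k)"
    using length_ray_prefix[of ?k s] by auto
  then have "ray_prefix s ?k ! i = ray_prefix s ?k ! i'"
    using assms(2) ray_enum_eq_nth by simp
  then show ?thesis
    using near_path_ray_prefix[OF assms(1)] len nth_eq_iff_index_eq
    unfolding near_path_def by blast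
qed

lemma ray_enum_near:
  assumes "core s"
  shows "near (ray_enum s i) (ray_enum s (Suc i))"
proof -
  let ?L = "ray_prefix s (Suc (Suc i))"
  have len: "Suc i < length ?L"
    using length_ray_prefix[of "Suc (Suc i)" s] by simp
  then have "near (?L ! i) (?L ! Suc i)"
    using near_path_ray_prefix[OF assms] successively_nth unfolding near_path_def by blast
  then show ?thesis
    using len ray_enum_eq_nth[of i s "Suc (Suc i)"] ray_enum_eq_nth[of "Suc i" s "Suc (Suc i)"]
    by simp
qed

lemma ray_enum_path: "core s \<Longrightarrow> (ray_enum s i, ray_enum s (i + d)) \<in> adj ^^ (3 * d)"
proof (induction d)
  case (Suc d)
  then have "(ray_enum s i, ray_enum s (Suc (i + d))) \<in> adj ^^ (3 * d + 3)"
    using ray_enum_near[OF Suc.prems] relpow_trans unfolding near_def by fast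
  then show ?case
    by (simp add: add.commute)
qed simp

lemma ray_enum_unique:
  assumes s: "s \<in> ray_starts" and s': "s' \<in> ray_starts" and eq: "ray_enum s i = ray_enum s' i'"
  shows "s = s' \<and> i = i'"
proof -
  have cs: "core s" "core s'"
    using s s' unfolding ray_starts_def by auto
  obtain j where j: "ray_enum s i \<in> set (cluster ((next_core ^^ j) s))"
    using ray_enum_in_prefix[of s i] unfolding set_ray_prefix by blast
  obtain j' where j': "ray_enum s i \<in> set (cluster ((next_core ^^ j') s'))"
    using ray_enum_in_prefix[of s' i'] eq unfolding set_ray_prefix by auto
  have "(next_core ^^ j) s = (next_core ^^ j') s'"
  proof (rule ccontr)
    assume "(next_core ^^ j) s \<noteq> (next_core ^^ j') s'"
    then have "set (cluster ((next_core ^^ j) s)) \<inter> set (cluster ((next_core ^^ j') s')) = {}"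
      using clusters_disjoint next_core_pow cs by blast
    then show False
      using j j' by blast
  qed
  then have "s = s'"
    using ray_starts_unique[OF s s'] by simp
  then show ?thesis
    using ray_enum_inj[OF cs(1)] eq by simp
qed

lemma ray_enum_surj:
  assumes "u \<in> X"
  shows "\<exists>s\<in>ray_starts. \<exists>i. ray_enum s i = u"
proof -
  obtain a where a: "core a" "u \<in> set (cluster a)"
    using in_some_cluster[OF assms] by blast
  obtain s j where s: "s \<in> ray_starts" "(next_core ^^ j) s = a"
    using core_on_ray[OF a(1)] by blast
  have "u \<in> set (ray_prefix s (Suc j))"
    unfolding set_ray_prefix using a s by blast
  then obtain i where "i < length (ray_prefix s (Suc j))" "ray_prefix s (Suc j) ! i = u"
    by (metis in_set_conv_nth)
  then have "ray_enum s i = u"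
    using ray_enum_eq_nth by simp
  with s show ?thesis
    by blast
qed

definition chunk :: "nat \<Rightarrow> 'x \<Rightarrow> nat \<Rightarrow> 'x set" where
  "chunk c s t = ray_enum s ` {t * c..<Suc t * c}"

definition chunks :: "nat \<Rightarrow> 'x set set" where
  "chunks c = {chunk c s t | s t. s \<in> ray_starts}"

lemma ray_enum_close:
  assumes "core s" and "i \<le> j" and "j < i + c"
  shows "(ray_enum s i, ray_enum s j) \<in> adj ^^ (3 * c)"
proof (rule relpow_extend_loop)
  show "(ray_enum s i, ray_enum s j) \<in> adj ^^ (3 * (j - i))"
    using ray_enum_path[OF assms(1), of i "j - i"] assms(2) by simp
qed (use adj_refl ray_enum_in[OF assms(1)] assms(3) in auto)

lemma chunk_diameter:
  assumes "core s" and "x \<in> chunk c s t" and "y \<in> chunk c s t"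
  shows "(x,y) \<in> adj ^^ (3 * c)"
proof -
  obtain i j where ij: "x = ray_enum s i" "y = ray_enum s j"
    "t * c \<le> i" "i < Suc t * c" "t * c \<le> j" "j < Suc t * c"
    using assms(2,3) unfolding chunk_def by auto
  show ?thesis
  proof (cases "i \<le> j")
    case True
    then show ?thesis
      using ray_enum_close[OF assms(1)] ij by simp
  next
    case False
    then have "(y,x) \<in> adj ^^ (3 * c)"
      using ray_enum_close[OF assms(1), of j i c] ij by simp
    then show ?thesis
      using sym_relpow[OF sym_adj] by (auto dest: symD)
  qed
qed

lemma chunk_in_chunks:
  assumes "B \<in> chunks c"
  shows "B \<subseteq> X \<and> card B = c \<and> (\<forall>x\<in>B. \<forall>y\<in>B. (x,y) \<in> adj ^^ (3 * c))"
proof -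
  obtain s t where s: "s \<in> ray_starts" "B = chunk c s t"
    using assms unfolding chunks_def by blast
  then have "core s"
    unfolding ray_starts_def by simp
  then have "inj_on (ray_enum s) {t * c..<Suc t * c}"
    using ray_enum_inj by (meson inj_onI)
  then show ?thesis
    using s ray_enum_in[OF \<open>core s\<close>] chunk_diameter[OF \<open>core s\<close>]
    unfolding chunk_def by (auto simp: card_image)
qed

lemma chunks_partition:
  assumes "1 \<le> c" and "u \<in> X"
  shows "\<exists>!B. B \<in> chunks c \<and> u \<in> B"
proof -
  obtain s i where s: "s \<in> ray_starts" "ray_enum s i = u"
    using ray_enum_surj[OF assms(2)] by blast
  have "i \<in> {i div c * c..<Suc (i div c) * c}"
    using assms(1) by (simp add: dividend_less_div_times)
  then have u: "u \<in> chunk c s (i div c)"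
    unfolding chunk_def using s by blast
  show ?thesis
  proof (rule ex1I[of _ "chunk c s (i div c)"])
    show "chunk c s (i div c) \<in> chunks c \<and> u \<in> chunk c s (i div c)"
      using u s unfolding chunks_def by blast
  next
    fix B assume B: "B \<in> chunks c \<and> u \<in> B"
    then obtain s' t' where st': "s' \<in> ray_starts" "B = chunk c s' t'"
      unfolding chunks_def by blast
    then obtain i' where i': "u = ray_enum s' i'" "t' * c \<le> i'" "i' < Suc t' * c"
      using B unfolding chunk_def by auto
    have "ray_enum s' i' = ray_enum s i"
      using i'(1) s(2) by simp
    then have "s' = s" "i' = i"
      using ray_enum_unique[OF st'(1) s(1)] by auto
    then have "t' = i div c"
      using i' assms(1) by (metis Suc_eq_plus1 div_nat_eqI mult.commute)
    then show "B = chunk c s (i div c)"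
      using st' \<open>s' = s\<close> by simp
  qed
qed

lemma cluster_root_subset_chunk:
  assumes "length (cluster r) \<le> c"
  shows "set (cluster r) \<subseteq> chunk c r 0"
proof
  fix u assume "u \<in> set (cluster r)"
  then obtain i where i: "i < length (cluster r)" "cluster r ! i = u"
    by (metis in_set_conv_nth)
  moreover have "ray_prefix r 1 = cluster r"
    unfolding ray_prefix_def by simp
  ultimately have "ray_enum r i = u"
    using ray_enum_eq_nth[of i r 1] by simp
  then show "u \<in> chunk c r 0"
    unfolding chunk_def using i assms by auto
qed

lemma leaf_child_in_cluster:
  assumes "w \<in> children v" and "children w = {}"
  shows "w \<in> set (cluster v)"
proof -
  have "w \<in> X" "v \<in> X"
    using childrenD[OF assms(1)] by auto
  then have "subtree w = {w}"
    using subtree_unfold[OF \<open>w \<in> X\<close>] assms(2) by simp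
  then show ?thesis
    using cluster_props[OF \<open>v \<in> X\<close>] assms(1) by auto
qed

theorem tree_partition:
  "\<exists>P. finite P \<and> r \<in> P \<and> P \<subseteq> X \<and> {w \<in> children r. children w = {}} \<subseteq> P \<and>
    (\<forall>c. card P \<le> c \<longrightarrow> (\<exists>Q. (\<forall>B\<in>Q. B \<subseteq> X \<and> card B = c \<and> (\<forall>x\<in>B. \<forall>y\<in>B. (x,y) \<in> adj ^^ (3 * c)))
        \<and> (\<forall>u\<in>X. \<exists>!B. B \<in> Q \<and> u \<in> B) \<and> (\<exists>B\<in>Q. P \<subseteq> B)))"
proof -
  let ?P = "set (cluster r)"
  have "distinct (cluster r)"
    using cluster_props[OF root_in] unfolding near_path_def by blast
  have P: "finite ?P" "r \<in> ?P" "?P \<subseteq> X" "{w \<in> children r. children w = {}} \<subseteq> ?P"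
    using cluster_subset[OF root_in] leaf_child_in_cluster unfolding cluster_def by auto
  have Q: "\<exists>Q. (\<forall>B\<in>Q. B \<subseteq> X \<and> card B = c \<and> (\<forall>x\<in>B. \<forall>y\<in>B. (x,y) \<in> adj ^^ (3 * c)))
      \<and> (\<forall>u\<in>X. \<exists>!B. B \<in> Q \<and> u \<in> B) \<and> (\<exists>B\<in>Q. ?P \<subseteq> B)" if "card ?P \<le> c" for c
  proof (intro exI[of _ "chunks c"] conjI)
    have len: "length (cluster r) \<le> c"
      using that \<open>distinct (cluster r)\<close> by (simp add: distinct_card)
    then have "1 \<le> c"
      unfolding cluster_def by simp
    then show "\<forall>u\<in>X. \<exists>!B. B \<in> chunks c \<and> u \<in> B"
      using chunks_partition by blast
    have "chunk c r 0 \<in> chunks c"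
      using core_root unfolding chunks_def ray_starts_def by blast
    then show "\<exists>B\<in>chunks c. ?P \<subseteq> B"
      using cluster_root_subset_chunk[OF len] by blast
  qed (use chunk_in_chunks in blast)
  show ?thesis
    by (intro exI[of _ ?P] conjI allI impI P Q)
qed

end

section \<open>Cayley graphs and equipartitions\<close>

locale cayley_graph = group G for G (structure) +
  fixes U :: "'a set"
  assumes gens_subset: "U \<subseteq> carrier G" and finite_gens: "finite U" and one_in_gens: "\<one> \<in> U"
    and inv_in_gens: "\<And>u. u \<in> U \<Longrightarrow> inv u \<in> U" and generate_gens: "generate G U = carrier G"
begin

definition E :: "('a \<times> 'a) set" where
  "E = {(x,y). x \<in> carrier G \<and> y \<in> carrier G \<and> inv x \<otimes> y \<in> U}"

lemma E_refl: "x \<in> carrier G \<Longrightarrow> (x,x) \<in> E"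
  unfolding E_def using one_in_gens by simp

lemma E_sym: "sym E"
proof (rule symI)
  fix x y assume "(x,y) \<in> E"
  then have xy: "x \<in> carrier G" "y \<in> carrier G" "inv x \<otimes> y \<in> U"
    unfolding E_def by auto
  have "inv (inv x \<otimes> y) = inv y \<otimes> x"
    using xy by (simp add: inv_mult_group)
  then show "(y,x) \<in> E"
    using inv_in_gens[OF xy(3)] xy unfolding E_def by simp
qed

lemma E_carrier: "(x,y) \<in> E \<Longrightarrow> x \<in> carrier G \<and> y \<in> carrier G"
  unfolding E_def by auto

lemma relpow_E_carrier: "(x,y) \<in> E ^^ k \<Longrightarrow> x \<in> carrier G \<Longrightarrow> y \<in> carrier G"
  by (induction k arbitrary: y) (auto dest: E_carrier)

lemma E_transl:
  assumes "(x,y) \<in> E" and "z \<in> carrier G"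
  shows "(z \<otimes> x, z \<otimes> y) \<in> E"
proof -
  have xy: "x \<in> carrier G" "y \<in> carrier G" "inv x \<otimes> y \<in> U"
    using assms(1) unfolding E_def by auto
  have "inv (z \<otimes> x) \<otimes> (z \<otimes> y) = inv x \<otimes> y"
    using xy assms(2) by (simp add: inv_mult_group m_assoc[symmetric])
      (simp add: m_assoc[symmetric] l_inv m_assoc)
  then show ?thesis
    using xy assms(2) unfolding E_def by simp
qed

lemma relpow_E_transl: "(x,y) \<in> E ^^ k \<Longrightarrow> z \<in> carrier G \<Longrightarrow> (z \<otimes> x, z \<otimes> y) \<in> E ^^ k"
  by (induction k arbitrary: y) (auto intro: relpow_Suc_I E_transl)

lemma finite_E_reach:
  assumes "x \<in> carrier G"
  shows "finite {y. (x,y) \<in> E ^^ k}"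
proof (induction k)
  case (Suc k)
  have "{y. (x,y) \<in> E ^^ Suc k} \<subseteq> (\<lambda>(z,u). z \<otimes> u) ` ({z. (x,z) \<in> E ^^ k} \<times> U)"
  proof
    fix y assume "y \<in> {y. (x,y) \<in> E ^^ Suc k}"
    then obtain z where z: "(x,z) \<in> E ^^ k" "(z,y) \<in> E"
      by (auto elim: relpow_Suc_E)
    then have zy: "z \<in> carrier G" "y \<in> carrier G" "inv z \<otimes> y \<in> U"
      unfolding E_def by auto
    then have "y = z \<otimes> (inv z \<otimes> y)"
      by (simp add: m_assoc[symmetric])
    then show "y \<in> (\<lambda>(z,u). z \<otimes> u) ` ({z. (x,z) \<in> E ^^ k} \<times> U)"
      using z zy by force
  qed
  then show ?case
    using Suc finite_gens finite_subset by blast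
qed simp

definition ball :: "nat \<Rightarrow> 'a set" where
  "ball k = {y. (\<one>, y) \<in> E ^^ k}"

lemma finite_ball: "finite (ball k)"
  unfolding ball_def using finite_E_reach by simp

lemma connected: "g \<in> carrier G \<Longrightarrow> \<exists>k. g \<in> ball k"
proof -
  have "\<exists>k. (\<one>, g) \<in> E ^^ k" if "g \<in> generate G U" for g
    using that
  proof (induction rule: generate.induct)
    case one
    then show ?case
      by (meson relpow_0_I)
  next
    case (incl h)
    then have "(\<one>, h) \<in> E"
      using gens_subset unfolding E_def by auto
    then show ?case
      by (metis relpow_1)
  next
    case (inv h)
    then have "(\<one>, inv h) \<in> E"
      using gens_subset inv_in_gens unfolding E_def by auto
    then show ?case
      by (metis relpow_1)
  next
    case (eng g h)
    then obtain a b where "(\<one>, g) \<in> E ^^ a" "(\<one>, h) \<in> E ^^ b"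
      by blast
    moreover from this have "(g, g \<otimes> h) \<in> E ^^ b"
      using relpow_E_transl[of \<one> h b g] relpow_E_carrier by simp
    ultimately show ?case
      using relpow_trans by fast
  qed
  then show "g \<in> carrier G \<Longrightarrow> \<exists>k. g \<in> ball k"
    unfolding ball_def generate_gens by blast
qed

lemma countable_carrier: "countable (carrier G)"
proof -
  have "carrier G \<subseteq> (\<Union>k. ball k)"
    using connected by blast
  moreover have "countable (\<Union>k. ball k)"
    using finite_ball by (simp add: countable_finite)
  ultimately show ?thesis
    using countable_subset by blast
qed

end

definition block_at :: "'x set set \<Rightarrow> 'x \<Rightarrow> 'x set" where
  "block_at P g = (THE A. A \<in> P \<and> g \<in> A)"

lemma block_at:
  assumes "\<exists>!A. A \<in> P \<and> g \<in> A"
  shows "block_at P g \<in> P \<and> g \<in> block_at P g"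
  unfolding block_at_def using assms by (rule theI')

lemma block_at_eq:
  assumes "\<exists>!A. A \<in> P \<and> g \<in> A" and "A \<in> P" and "g \<in> A"
  shows "block_at P g = A"
  using block_at[OF assms(1)] assms by blast

lemma (in group) card_l_coset:
  assumes "a \<in> carrier G" and "A \<subseteq> carrier G"
  shows "card (a <# A) = card A"
proof -
  have "inj_on (\<lambda>h. a \<otimes> h) A"
  proof (rule inj_onI)
    fix x y assume "x \<in> A" "y \<in> A" "a \<otimes> x = a \<otimes> y"
    moreover have "x \<in> carrier G" "y \<in> carrier G"
      using assms(2) calculation by auto
    ultimately show "x = y"
      using assms(1) Units_eq by simp
  qed
  moreover have "a <# A = (\<lambda>h. a \<otimes> h) ` A"
    unfolding l_coset_def by auto
  ultimately show ?thesis
    by (simp add: card_image)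
qed

lemma (in group) l_coset_inv:
  assumes "A \<subseteq> carrier G" and "finite A" and "a \<in> A"
  shows "a <# (inv a <# A) = A" and "inv a <# A \<subseteq> carrier G" and "finite (inv a <# A)"
    and "card (inv a <# A) = card A" and "\<one> \<in> inv a <# A"
proof -
  have a: "a \<in> carrier G" "inv a \<in> carrier G"
    using assms by auto
  show "a <# (inv a <# A) = A"
    using a assms(1) by (simp add: lcos_m_assoc lcos_mult_one)
  show "inv a <# A \<subseteq> carrier G"
    using l_coset_subset_G[OF assms(1) a(2)] .
  show "finite (inv a <# A)"
    unfolding l_coset_def using assms(2) by simp
  show "card (inv a <# A) = card A"
    using card_l_coset a assms(1) by blast
  show "\<one> \<in> inv a <# A"
    unfolding l_coset_def using a assms(3) by force
qed

text \<open>A partition of \<open>G\<close> into translates \<open>c A <# S\<close> of finitely many shapes \<open>S\<close> is a polytiling,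
  with the shapes as tiles and the centres \<open>c A\<close> as translation sets.\<close>

lemma (in group) fair_polytiling_of_shapes:
  assumes part: "\<And>g. g \<in> carrier G \<Longrightarrow> \<exists>!A. A \<in> P \<and> g \<in> A"
    and blocks: "\<And>A. A \<in> P \<Longrightarrow> A \<subseteq> carrier G \<and> finite A \<and> card A = m \<and> c A \<in> A"
    and shapes: "finite ((\<lambda>A. inv (c A) <# A) ` P)"
    and A0: "A0 \<in> P" "c A0 = \<one>"
  shows "\<exists>k \<Delta> T. fair_polytiling G k \<Delta> T \<and> induced_partition G k \<Delta> T = P
    \<and> \<one> \<in> \<Delta> 0 \<and> T 0 = A0"
proof -
  define sh where "sh = (\<lambda>A. inv (c A) <# A)"
  have sh: "c A \<in> carrier G" "c A <# sh A = A" "sh A \<subseteq> carrier G" "finite (sh A)"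
      "card (sh A) = m" "\<one> \<in> sh A" if "A \<in> P" for A
    using blocks[OF that] l_coset_inv[of A "c A"] unfolding sh_def by auto
  have "sh A0 = A0"
    using A0 blocks[OF A0(1)] lcos_mult_one unfolding sh_def by simp
  obtain xs where xs: "distinct xs" "set xs = sh ` P - {A0}"
    using finite_distinct_list[of "sh ` P - {A0}"] shapes unfolding sh_def by blast
  define T where "T = A0 # xs"
  define k where "k = length T"
  define \<Delta> where "\<Delta> i = {c A | A. A \<in> P \<and> sh A = T ! i}" for i
  have T: "distinct T" "set T = sh ` P"
    unfolding T_def using xs A0(1) \<open>sh A0 = A0\<close> by auto
  have tile_of: "\<exists>i<k. T ! i = sh A" if "A \<in> P" for A
    using T(2) that unfolding k_def by (metis image_eqI in_set_conv_nth)
  have block: "\<exists>B\<in>P. c B = \<delta> \<and> sh B = T ! i \<and> \<delta> <# T ! i = B" if "\<delta> \<in> \<Delta> i" for i \<delta>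
  proof -
    have "\<delta> \<in> {c A | A. A \<in> P \<and> sh A = T ! i}"
      using that by (simp add: \<Delta>_def)
    then obtain B where B: "B \<in> P" "sh B = T ! i" "\<delta> = c B"
      by blast
    then have "\<delta> <# T ! i = B"
      using sh(2)[OF B(1)] by simp
    with B show ?thesis
      by blast
  qed
  have induced: "induced_partition G k \<Delta> ((!) T) = P"
  proof
    show "induced_partition G k \<Delta> ((!) T) \<subseteq> P"
      unfolding induced_partition_def using block by blast
    show "P \<subseteq> induced_partition G k \<Delta> ((!) T)"
    proof
      fix A assume "A \<in> P"
      then obtain i where "i < k" "T ! i = sh A"
        using tile_of by blast
      moreover have "c A \<in> \<Delta> i" "c A <# sh A = A"
        using \<open>A \<in> P\<close> calculation sh(2) unfolding \<Delta>_def by auto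
      ultimately have "A = c A <# T ! i" "i < k" "c A \<in> \<Delta> i"
        by simp_all
      then show "A \<in> induced_partition G k \<Delta> ((!) T)"
        unfolding induced_partition_def by blast
    qed
  qed
  have unique: "\<exists>!(i, \<delta>). i < k \<and> \<delta> \<in> \<Delta> i \<and> g \<in> \<delta> <# T ! i" if g: "g \<in> carrier G" for g
  proof -
    obtain A where A: "A \<in> P" "g \<in> A"
      using part[OF g] by blast
    obtain i where i: "i < k" "T ! i = sh A"
      using tile_of[OF A(1)] by blast
    show ?thesis
    proof (rule ex1I[of _ "(i, c A)"])
      show "case (i, c A) of (i, \<delta>) \<Rightarrow> i < k \<and> \<delta> \<in> \<Delta> i \<and> g \<in> \<delta> <# T ! i"
        using A i sh(2) unfolding \<Delta>_def by auto
    next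
      fix y assume y: "case y of (i, \<delta>) \<Rightarrow> i < k \<and> \<delta> \<in> \<Delta> i \<and> g \<in> \<delta> <# T ! i"
      obtain i' \<delta>' where "y = (i', \<delta>')"
        by (cases y)
      with y obtain B where B: "i' < k" "B \<in> P" "c B = \<delta>'" "sh B = T ! i'" "g \<in> B"
        using block by fastforce
      then have "B = A"
        using part[OF g] A by blast
      then have "i' = i"
        using B(1,4) i T(1) nth_eq_iff_index_eq unfolding k_def by metis
      then show "y = (i, c A)"
        using \<open>y = (i', \<delta>')\<close> B(3) \<open>B = A\<close> by simp
    qed
  qed
  have tiles: "finite (T ! i) \<and> T ! i \<subseteq> carrier G \<and> \<one> \<in> T ! i \<and> card (T ! i) = m" if "i < k" for i
    using T(2) sh that unfolding k_def by (metis (no_types, lifting) image_iff nth_mem)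
  have "\<Delta> i \<noteq> {} \<and> \<Delta> i \<subseteq> carrier G" if "i < k" for i
    using T(2) sh(1) that unfolding k_def \<Delta>_def by (auto, metis image_iff nth_mem)
  then have "fair_polytiling G k \<Delta> ((!) T)"
    unfolding fair_polytiling_def polytiling_def using unique tiles
    by (simp add: k_def T_def)
  moreover have "\<one> \<in> \<Delta> 0" "T ! 0 = A0"
    using A0 \<open>sh A0 = A0\<close> unfolding \<Delta>_def T_def by force+
  ultimately show ?thesis
    using induced by blast
qed
context cayley_graph
begin

definition equipartition :: "'a set set \<Rightarrow> nat \<Rightarrow> nat \<Rightarrow> bool" where
  "equipartition P m D \<longleftrightarrow> 1 \<le> m
     \<and> (\<forall>A\<in>P. A \<subseteq> carrier G \<and> card A = m \<and> (\<forall>x\<in>A. \<forall>y\<in>A. (x,y) \<in> E ^^ D))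
     \<and> (\<forall>g\<in>carrier G. \<exists>!A. A \<in> P \<and> g \<in> A)"

lemma equipartition_block:
  assumes "equipartition P m D" and "A \<in> P"
  shows "A \<subseteq> carrier G" "card A = m" "finite A" "A \<noteq> {}" "\<forall>x\<in>A. \<forall>y\<in>A. (x,y) \<in> E ^^ D"
proof -
  have A: "A \<subseteq> carrier G" "card A = m" "\<forall>x\<in>A. \<forall>y\<in>A. (x,y) \<in> E ^^ D" "1 \<le> m"
    using assms unfolding equipartition_def by auto
  then have "0 < card A"
    by simp
  then show "finite A" "A \<noteq> {}"
    using card_gt_0_iff by blast+
  show "A \<subseteq> carrier G" "card A = m" "\<forall>x\<in>A. \<forall>y\<in>A. (x,y) \<in> E ^^ D"
    using A by simp_all
qed

lemma equipartition_unique: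
  "equipartition P m D \<Longrightarrow> g \<in> carrier G \<Longrightarrow> \<exists>!A. A \<in> P \<and> g \<in> A"
  unfolding equipartition_def by simp

lemma equipartition_block_at:
  assumes "equipartition P m D" and "g \<in> carrier G"
  shows "block_at P g \<in> P" and "g \<in> block_at P g"
  using block_at[OF equipartition_unique[OF assms]] by simp_all

lemma equipartition_block_at_eq:
  assumes "equipartition P m D" and "A \<in> P" and "g \<in> A"
  shows "block_at P g = A"
proof -
  have "g \<in> carrier G"
    using equipartition_block(1)[OF assms(1,2)] assms(3) by blast
  then show ?thesis
    using block_at_eq[OF equipartition_unique[OF assms(1)] assms(2,3)] by simp
qed

lemma equipartition_singletons: "equipartition ((\<lambda>g. {g}) ` carrier G) 1 0"
  unfolding equipartition_def by auto

text \<open>Centring each block at one of its elements (at \<open>\<one>\<close> when possible) moves it into the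
  ball of radius \<open>D\<close>, which is finite.\<close>

lemma fair_polytiling_of_equipartition:
  assumes P: "equipartition P m D"
  shows "\<exists>k \<Delta> T. fair_polytiling G k \<Delta> T \<and> induced_partition G k \<Delta> T = P
    \<and> \<one> \<in> \<Delta> 0 \<and> T 0 = block_at P \<one>"
proof -
  define c where "c A = (if \<one> \<in> A then \<one> else (SOME x. x \<in> A))" for A
  have c: "c A \<in> A" if "A \<in> P" for A
    using equipartition_block(4)[OF P that] unfolding c_def by (auto intro: someI_ex)
  have "inv (c A) <# A \<subseteq> ball D" if "A \<in> P" for A
  proof
    fix y assume "y \<in> inv (c A) <# A"
    then obtain a where a: "a \<in> A" "y = inv (c A) \<otimes> a"
      unfolding l_coset_def by auto
    have cA: "c A \<in> carrier G"
      using c that equipartition_block(1)[OF P that] by blast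
    have "(c A, a) \<in> E ^^ D"
      using equipartition_block(5)[OF P that] c[OF that] a(1) by blast
    then have "(inv (c A) \<otimes> c A, inv (c A) \<otimes> a) \<in> E ^^ D"
      using cA by (intro relpow_E_transl) simp_all
    then show "y \<in> ball D"
      unfolding ball_def using a cA by simp
  qed
  then have "(\<lambda>A. inv (c A) <# A) ` P \<subseteq> Pow (ball D)"
    by blast
  then have shapes: "finite ((\<lambda>A. inv (c A) <# A) ` P)"
    by (rule finite_subset) (simp add: finite_ball)
  have blocks: "A \<subseteq> carrier G \<and> finite A \<and> card A = m \<and> c A \<in> A" if "A \<in> P" for A
    using equipartition_block[OF P that] c[OF that] by simp
  have "block_at P \<one> \<in> P" "c (block_at P \<one>) = \<one>"
    using equipartition_block_at[OF P] unfolding c_def by simp_all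
  with equipartition_unique[OF P] blocks shapes show ?thesis
    by (rule fair_polytiling_of_shapes)
qed

lemma equipartition_disjoint:
  assumes "equipartition P m D" and "A \<in> P" and "B \<in> P" and "A \<noteq> B"
  shows "disjnt A B"
proof -
  have "block_at P g = A" "block_at P g = B" if "g \<in> A" "g \<in> B" for g
    using equipartition_block_at_eq[OF assms(1) assms(2) that(1)]
      equipartition_block_at_eq[OF assms(1) assms(3) that(2)] by simp_all
  then show ?thesis
    using assms(4) unfolding disjnt_def by blast
qed

lemma card_Union_blocks:
  assumes "equipartition P m D" and "B \<subseteq> P" and "finite B"
  shows "card (\<Union>B) = card B * m"
proof -
  have "pairwise disjnt B"
    unfolding pairwise_def using equipartition_disjoint[OF assms(1)] assms(2) by blast
  then have "card (\<Union>B) = sum card B"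
    using assms equipartition_block(3) by (intro card_Union_disjoint) auto
  also have "\<dots> = sum (\<lambda>_. m) B"
    using assms(1,2) equipartition_block(2) by (intro sum.cong) auto
  finally show ?thesis
    by simp
qed

lemma block_at_mono:
  assumes "equipartition P m D" and "equipartition P' m' D'" and "finer P P'"
    and "g \<in> carrier G"
  shows "block_at P g \<subseteq> block_at P' g"
proof -
  obtain B where B: "B \<in> P'" "block_at P g \<subseteq> B"
    using assms(3) equipartition_block_at(1)[OF assms(1,4)] unfolding finer_def by blast
  then have "g \<in> B"
    using equipartition_block_at(2)[OF assms(1,4)] by blast
  then show ?thesis
    using B equipartition_block_at_eq[OF assms(2) B(1)] by simp
qed

end

section \<open>Coarsening an equipartition\<close>

locale block_graph = cayley_graph +
  fixes P :: "'a set set" and m D :: nat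
  assumes equi: "equipartition P m D" and infinite_carrier: "infinite (carrier G)"
begin

abbreviation block :: "'a \<Rightarrow> 'a set" where
  "block \<equiv> block_at P"

abbreviation root_block :: "'a set" where
  "root_block \<equiv> block_at P \<one>"

lemma block: "g \<in> carrier G \<Longrightarrow> block g \<in> P \<and> g \<in> block g"
  using equipartition_block_at[OF equi] by simp

lemma block_eq: "A \<in> P \<Longrightarrow> g \<in> A \<Longrightarrow> block g = A"
  using equipartition_block_at_eq[OF equi] .

lemma root_block: "root_block \<in> P"
  using block by simp

definition block_adj :: "('a set \<times> 'a set) set" where
  "block_adj = {(A,B). A \<in> P \<and> B \<in> P \<and> (\<exists>a\<in>A. \<exists>b\<in>B. (a,b) \<in> E)}"

lemma block_adjD: "(A,B) \<in> block_adj \<Longrightarrow> A \<in> P \<and> B \<in> P"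
  unfolding block_adj_def by simp

lemma block_adj_refl:
  assumes "A \<in> P"
  shows "(A,A) \<in> block_adj"
proof -
  obtain a where "a \<in> A" "a \<in> carrier G"
    using equipartition_block(1,4)[OF equi assms] by blast
  then show ?thesis
    using E_refl assms unfolding block_adj_def by blast
qed

lemma sym_block_adj: "sym block_adj"
  using E_sym unfolding block_adj_def sym_def by blast

lemma block_adj_of_E_path:
  assumes "(x,y) \<in> E ^^ k" and "x \<in> carrier G"
  shows "(block x, block y) \<in> block_adj ^^ k"
  using assms(1)
proof (induction k arbitrary: y)
  case 0
  then show ?case
    using block_adj_refl block assms(2) by simp
next
  case (Suc k)
  then obtain z where z: "(x,z) \<in> E ^^ k" "(z,y) \<in> E"
    by (auto elim: relpow_Suc_E)
  then have "z \<in> carrier G" "y \<in> carrier G"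
    using E_carrier by auto
  then have "(block z, block y) \<in> block_adj"
    using block z(2) unfolding block_adj_def by blast
  with Suc.IH[OF z(1)] show ?case
    by (rule relpow_Suc_I)
qed

lemma E_path_of_block_adj:
  assumes "(A,B) \<in> block_adj ^^ k" and "A \<in> P"
  shows "B \<in> P \<and> (\<forall>a\<in>A. \<exists>b\<in>B. (a,b) \<in> E ^^ (k * Suc D))"
  using assms(1)
proof (induction k arbitrary: B)
  case (Suc k)
  obtain C where C: "(A,C) \<in> block_adj ^^ k" "(C,B) \<in> block_adj"
    using Suc.prems by (rule relpow_Suc_E)
  then obtain c b where cb: "c \<in> C" "b \<in> B" "(c,b) \<in> E" "B \<in> P"
    unfolding block_adj_def by blast
  have IH: "C \<in> P" "\<forall>a\<in>A. \<exists>c\<in>C. (a,c) \<in> E ^^ (k * Suc D)"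
    using Suc.IH[OF C(1)] by auto
  have "\<exists>b\<in>B. (a,b) \<in> E ^^ (Suc k * Suc D)" if a: "a \<in> A" for a
  proof -
    obtain c' where c': "c' \<in> C" "(a,c') \<in> E ^^ (k * Suc D)"
      using IH(2) a by blast
    have "(c',c) \<in> E ^^ D"
      using equipartition_block(5)[OF equi IH(1)] c'(1) cb(1) by blast
    then have "(a,c) \<in> E ^^ (k * Suc D + D)"
      using c'(2) relpow_trans by fast
    then have "(a,b) \<in> E ^^ Suc (k * Suc D + D)"
      using cb(3) by (rule relpow_Suc_I)
    moreover have "Suc (k * Suc D + D) = Suc k * Suc D"
      by simp
    ultimately show ?thesis
      using cb(2) by metis
  qed
  then show ?case
    using cb(4) by blast
next
  case 0
  then have "B = A"
    by simp
  then show ?case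
    using assms(2) by (auto intro: relpow_0_I)
qed

lemma finite_block_adj_reach:
  assumes "A \<in> P"
  shows "finite {B. (A,B) \<in> block_adj ^^ k}"
proof -
  obtain a where a: "a \<in> A" "a \<in> carrier G"
    using equipartition_block(1,4)[OF equi assms] by blast
  have "{B. (A,B) \<in> block_adj ^^ k} \<subseteq> block ` {y. (a,y) \<in> E ^^ (k * Suc D)}"
  proof
    fix B assume "B \<in> {B. (A,B) \<in> block_adj ^^ k}"
    then obtain b where "B \<in> P" "b \<in> B" "(a,b) \<in> E ^^ (k * Suc D)"
      using E_path_of_block_adj assms a(1) by blast
    then show "B \<in> block ` {y. (a,y) \<in> E ^^ (k * Suc D)}"
      using block_eq by (intro image_eqI[of _ _ b]) simp_all
  qed
  then show ?thesis
    using finite_E_reach[OF a(2)] finite_surj by blast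
qed

lemma infinite_blocks: "infinite P"
proof
  assume "finite P"
  moreover have "carrier G \<subseteq> \<Union>P"
    using block by blast
  ultimately show False
    using infinite_carrier equipartition_block(3)[OF equi] finite_subset by blast
qed

definition block_dist :: "'a set \<Rightarrow> nat" where
  "block_dist B = (LEAST k. (root_block, B) \<in> block_adj ^^ k)"

lemma block_dist_path:
  assumes "B \<in> P"
  shows "(root_block, B) \<in> block_adj ^^ block_dist B"
proof -
  obtain b where "b \<in> B" "b \<in> carrier G"
    using equipartition_block(1,4)[OF equi assms] by blast
  moreover obtain k where "(\<one>, b) \<in> E ^^ k"
    using connected calculation(2) unfolding ball_def by blast
  ultimately have "(root_block, B) \<in> block_adj ^^ k"
    using block_adj_of_E_path block_eq[OF assms] by fastforce
  then show ?thesis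
    unfolding block_dist_def by (rule LeastI)
qed

lemma block_dist_le: "(root_block, B) \<in> block_adj ^^ k \<Longrightarrow> block_dist B \<le> k"
  unfolding block_dist_def by (rule Least_le)

lemma block_dist_Suc:
  assumes "B \<in> P" and "block_dist B = Suc n"
  shows "\<exists>B'. B' \<in> P \<and> block_dist B' = n \<and> (B',B) \<in> block_adj"
proof -
  obtain B' where B': "(root_block, B') \<in> block_adj ^^ n" "(B',B) \<in> block_adj"
    using block_dist_path[OF assms(1)] assms(2) by (auto elim: relpow_Suc_E)
  have "B' \<in> P"
    using B'(2) block_adjD by blast
  moreover have "block_dist B \<le> Suc (block_dist B')"
    using relpow_Suc_I[OF block_dist_path[OF \<open>B' \<in> P\<close>] B'(2)] by (rule block_dist_le)
  ultimately show ?thesis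
    using block_dist_le[OF B'(1)] B'(2) assms(2) by (intro exI[of _ B']) simp
qed

text \<open>A spanning tree of the block graph: blocks within distance \<open>R + 1\<close> of the root block hang
  directly from it, every other block from a neighbour one step closer to the root block. Thus
  blocks within distance \<open>R\<close> become leaves next to the root, while tree edges still have length
  at most \<open>R + 1\<close> in the block graph.\<close>

definition tree_parent :: "nat \<Rightarrow> 'a set \<Rightarrow> 'a set" where
  "tree_parent R B = (if block_dist B \<le> Suc R then root_block
     else (SOME B'. B' \<in> P \<and> block_dist B' = block_dist B - 1 \<and> (B',B) \<in> block_adj))"

definition tree_depth :: "nat \<Rightarrow> 'a set \<Rightarrow> nat" where
  "tree_depth R B = (if B = root_block then 0 else if block_dist B \<le> Suc R then 1
     else block_dist B - R)"

lemma tree_parent_far: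
  assumes "B \<in> P" and "Suc R < block_dist B"
  shows "tree_parent R B \<in> P \<and> block_dist (tree_parent R B) = block_dist B - 1
    \<and> (tree_parent R B, B) \<in> block_adj"
proof -
  have "\<exists>B'. B' \<in> P \<and> block_dist B' = block_dist B - 1 \<and> (B',B) \<in> block_adj"
    using block_dist_Suc[OF assms(1), of "block_dist B - 1"] assms(2) by simp
  then have "(SOME B'. B' \<in> P \<and> block_dist B' = block_dist B - 1 \<and> (B',B) \<in> block_adj) \<in> P
      \<and> block_dist (SOME B'. B' \<in> P \<and> block_dist B' = block_dist B - 1 \<and> (B',B) \<in> block_adj)
        = block_dist B - 1
      \<and> ((SOME B'. B' \<in> P \<and> block_dist B' = block_dist B - 1 \<and> (B',B) \<in> block_adj), B)
        \<in> block_adj"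
    by (rule someI_ex)
  then show ?thesis
    unfolding tree_parent_def using assms(2) by simp
qed

lemma tree_parent_path:
  assumes "B \<in> P"
  shows "(tree_parent R B, B) \<in> block_adj ^^ Suc R"
proof (cases "block_dist B \<le> Suc R")
  case True
  then have "(root_block, B) \<in> block_adj ^^ Suc R"
    using relpow_extend_loop[OF block_dist_path[OF assms] block_adj_refl[OF assms]] by blast
  then show ?thesis
    unfolding tree_parent_def using True by simp
next
  case False
  then have "(tree_parent R B, B) \<in> block_adj ^^ 1"
    using tree_parent_far[OF assms] by simp
  then show ?thesis
    using relpow_extend_loop block_adj_refl[OF assms] by fastforce
qed

lemma rooted_tree_blocks: "rooted_tree P root_block (tree_parent R) (tree_depth R)"
proof
  show "root_block \<in> P" "infinite P" "tree_depth R root_block = 0"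
    using root_block infinite_blocks unfolding tree_depth_def by simp_all
next
  fix B assume "B \<in> P"
  have "{W \<in> P. W \<noteq> root_block \<and> tree_parent R W = B} \<subseteq> {W. (B,W) \<in> block_adj ^^ Suc R}"
    using tree_parent_path by blast
  then show "finite {W \<in> P. W \<noteq> root_block \<and> tree_parent R W = B}"
    using finite_block_adj_reach[OF \<open>B \<in> P\<close>] finite_subset by blast
  assume "B \<noteq> root_block"
  show "tree_parent R B \<in> P \<and> Suc (tree_depth R (tree_parent R B)) = tree_depth R B"
  proof (cases "block_dist B \<le> Suc R")
    case True
    then show ?thesis
      unfolding tree_parent_def tree_depth_def using \<open>B \<noteq> root_block\<close> root_block by simp
  next
    case False
    then have "tree_parent R B \<in> P" "block_dist (tree_parent R B) = block_dist B - 1"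
      using tree_parent_far[OF \<open>B \<in> P\<close>] by auto
    moreover from this have "tree_parent R B \<noteq> root_block"
      using False block_dist_le[of root_block 0] by auto
    ultimately show ?thesis
      using False \<open>B \<noteq> root_block\<close> unfolding tree_depth_def by auto
  qed
qed

lemma tree_adj_subset: "rooted_tree.adj P root_block (tree_parent R) \<subseteq> block_adj ^^ Suc R"
proof (rule subrelI)
  fix X Y assume "(X,Y) \<in> rooted_tree.adj P root_block (tree_parent R)"
  then have XY: "X \<in> P" "Y \<in> P"
    "X = Y \<or> tree_parent R X = Y \<or> tree_parent R Y = X"
    unfolding rooted_tree.adj_def[OF rooted_tree_blocks] by auto
  have X: "(X,X) \<in> block_adj ^^ Suc R"
  proof (rule relpow_extend_loop)
    show "(X,X) \<in> block_adj ^^ 0" "(X,X) \<in> block_adj"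
      using block_adj_refl[OF XY(1)] by simp_all
  qed simp
  consider "X = Y" | "tree_parent R X = Y" | "tree_parent R Y = X"
    using XY(3) by blast
  then show "(X,Y) \<in> block_adj ^^ Suc R"
  proof cases
    case 1
    then show ?thesis
      using X by simp
  next
    case 2
    then have "(Y,X) \<in> block_adj ^^ Suc R"
      using tree_parent_path[OF XY(1), of R] by simp
    then show ?thesis
      using symD[OF sym_relpow[OF sym_block_adj]] by blast
  next
    case 3
    then show ?thesis
      using tree_parent_path[OF XY(2), of R] by simp
  qed
qed

lemma near_block_is_leaf:
  assumes "B \<in> P" and "B \<noteq> root_block" and "block_dist B \<le> R"
  shows "B \<in> rooted_tree.children P root_block (tree_parent R) root_block"
    and "rooted_tree.children P root_block (tree_parent R) B = {}"
proof -
  interpret T: rooted_tree P root_block "tree_parent R" "tree_depth R"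
    by (rule rooted_tree_blocks)
  show "B \<in> T.children root_block"
    using assms unfolding T.children_def tree_parent_def by simp
  show "T.children B = {}"
  proof (rule ccontr)
    assume "T.children B \<noteq> {}"
    then obtain V where V: "V \<in> P" "tree_parent R V = B"
      unfolding T.children_def by blast
    show False
    proof (cases "block_dist V \<le> Suc R")
      case True
      then show False
        using V assms(2) unfolding tree_parent_def by simp
    next
      case False
      then have "block_dist B = block_dist V - 1"
        using tree_parent_far[OF V(1), of R] V(2) by simp
      then show False
        using False assms(3) by simp
    qed
  qed
qed

lemma equipartition_Union:
  assumes Q: "\<And>B. B \<in> Q \<Longrightarrow> B \<subseteq> P \<and> card B = c \<and> (\<forall>X\<in>B. \<forall>Y\<in>B. (X,Y) \<in> block_adj ^^ K)"
    and cover: "\<And>A. A \<in> P \<Longrightarrow> \<exists>!B. B \<in> Q \<and> A \<in> B" and "1 \<le> c"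
  shows "equipartition (Union ` Q) (c * m) (K * Suc D + D)"
  unfolding equipartition_def
proof (intro conjI ballI)
  show "1 \<le> c * m"
    using \<open>1 \<le> c\<close> equi unfolding equipartition_def by simp
next
  fix A assume "A \<in> Union ` Q"
  then obtain B where B: "B \<in> Q" "A = \<Union>B"
    by blast
  have BP: "B \<subseteq> P" "card B = c" "finite B"
    using Q[OF B(1)] \<open>1 \<le> c\<close> card.infinite by fastforce+
  show "A \<subseteq> carrier G"
    using B(2) BP(1) equipartition_block(1)[OF equi] by blast
  show "card A = c * m"
    using card_Union_blocks[OF equi BP(1,3)] B(2) BP(2) by simp
  show "(x,y) \<in> E ^^ (K * Suc D + D)" if xy: "x \<in> A" "y \<in> A" for x y
  proof -
    obtain X Y where XY: "X \<in> B" "Y \<in> B" "x \<in> X" "y \<in> Y"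
      using B(2) xy by blast
    then have "(X,Y) \<in> block_adj ^^ K" "X \<in> P" "Y \<in> P"
      using Q[OF B(1)] by auto
    then obtain b where b: "b \<in> Y" "(x,b) \<in> E ^^ (K * Suc D)"
      using E_path_of_block_adj XY(3) by blast
    moreover have "(b,y) \<in> E ^^ D"
      using equipartition_block(5)[OF equi \<open>Y \<in> P\<close>] b(1) XY(4) by blast
    ultimately show ?thesis
      using relpow_trans by fast
  qed
next
  fix g assume g: "g \<in> carrier G"
  obtain B where B: "B \<in> Q" "block g \<in> B"
    using cover block[OF g] by blast
  show "\<exists>!A. A \<in> Union ` Q \<and> g \<in> A"
  proof (rule ex1I[of _ "\<Union>B"])
    show "\<Union>B \<in> Union ` Q \<and> g \<in> \<Union>B"
      using B block[OF g] by blast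
  next
    fix A assume "A \<in> Union ` Q \<and> g \<in> A"
    then obtain B' C where B': "B' \<in> Q" "A = \<Union>B'" "C \<in> B'" "g \<in> C"
      by blast
    then have "C = block g"
      using Q[OF B'(1)] block_eq by blast
    then have "B' = B"
      using cover[OF block[OF g, THEN conjunct1]] B B'(1,3) by blast
    then show "A = \<Union>B"
      using B'(2) by simp
  qed
qed

lemma coarsening: "\<exists>P' m' D'. equipartition P' m' D' \<and> finer P P' \<and> ball R \<subseteq> block_at P' \<one>"
proof -
  interpret T: rooted_tree P root_block "tree_parent R" "tree_depth R"
    by (rule rooted_tree_blocks)
  obtain S where S: "finite S" "root_block \<in> S" "{W \<in> T.children root_block. T.children W = {}} \<subseteq> S"
    and split: "\<forall>c. card S \<le> c \<longrightarrow> (\<exists>Q. (\<forall>B\<in>Q. B \<subseteq> P \<and> card B = c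
      \<and> (\<forall>X\<in>B. \<forall>Y\<in>B. (X,Y) \<in> T.adj ^^ (3 * c))) \<and> (\<forall>A\<in>P. \<exists>!B. B \<in> Q \<and> A \<in> B)
      \<and> (\<exists>B\<in>Q. S \<subseteq> B))"
    using T.tree_partition by (elim exE conjE)
  define c where "c = card S"
  have "\<exists>Q. (\<forall>B\<in>Q. B \<subseteq> P \<and> card B = c \<and> (\<forall>X\<in>B. \<forall>Y\<in>B. (X,Y) \<in> T.adj ^^ (3 * c)))
      \<and> (\<forall>A\<in>P. \<exists>!B. B \<in> Q \<and> A \<in> B) \<and> (\<exists>B\<in>Q. S \<subseteq> B)"
    using split[rule_format, OF order_refl] unfolding c_def .
  then obtain Q B0 where Q: "\<forall>B\<in>Q. B \<subseteq> P \<and> card B = c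
      \<and> (\<forall>X\<in>B. \<forall>Y\<in>B. (X,Y) \<in> T.adj ^^ (3 * c))"
    and cover: "\<And>A. A \<in> P \<Longrightarrow> \<exists>!B. B \<in> Q \<and> A \<in> B" and B0: "B0 \<in> Q" "S \<subseteq> B0"
    by (elim exE conjE bexE) (rule that, auto)
  have "1 \<le> c"
    using S(1,2) unfolding c_def by (metis One_nat_def Suc_leI card_gt_0_iff empty_iff)
  have "T.adj ^^ (3 * c) \<subseteq> block_adj ^^ (3 * c * Suc R)"
    using tree_adj_subset by (rule relpow_mult_subset)
  then have "B \<subseteq> P \<and> card B = c \<and> (\<forall>X\<in>B. \<forall>Y\<in>B. (X,Y) \<in> block_adj ^^ (3 * c * Suc R))"
    if "B \<in> Q" for B
    using Q that by blast
  from equipartition_Union[OF this cover \<open>1 \<le> c\<close>]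
  have equi': "equipartition (Union ` Q) (c * m) (3 * c * Suc R * Suc D + D)" .
  have "finer P (Union ` Q)"
    unfolding finer_def
  proof
    fix A assume "A \<in> P"
    then obtain B where "B \<in> Q" "A \<in> B"
      using cover by (meson ex1_implies_ex)
    then show "\<exists>B'\<in>Union ` Q. A \<subseteq> B'"
      by blast
  qed
  moreover have "block_at (Union ` Q) \<one> = \<Union>B0"
  proof (rule equipartition_block_at_eq[OF equi'])
    show "\<Union>B0 \<in> Union ` Q"
      using B0(1) by blast
    show "\<one> \<in> \<Union>B0"
      using B0(2) S(2) block[OF one_closed] by blast
  qed
  moreover have "ball R \<subseteq> \<Union>B0"
  proof
    fix g assume "g \<in> ball R"
    then have g: "(\<one>, g) \<in> E ^^ R"
      unfolding ball_def by simp
    then have "g \<in> carrier G"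
      using relpow_E_carrier by simp
    then have "block g \<in> P" "g \<in> block g"
      using block by simp_all
    moreover have "block_dist (block g) \<le> R"
      using block_adj_of_E_path[OF g one_closed] by (rule block_dist_le)
    ultimately have "block g \<in> S"
      using S(2,3) near_block_is_leaf[of "block g" R] by (cases "block g = root_block") auto
    then show "g \<in> \<Union>B0"
      using B0(2) \<open>g \<in> block g\<close> by blast
  qed
  ultimately show ?thesis
    using equi' by (intro exI[of _ "Union ` Q"]) auto
qed

end

lemma (in cayley_graph) exists_coarser_equipartition:
  assumes "infinite (carrier G)" and "equipartition P m D"
  shows "\<exists>P' m' D'. equipartition P' m' D' \<and> finer P P' \<and> ball R \<subseteq> block_at P' \<one>"
proof -
  interpret block_graph G U P m D
    by unfold_locales (use assms in simp_all)
  show ?thesis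
    by (rule coarsening)
qed

lemma (in cayley_graph) poly_ccc_if_infinite:
  assumes "infinite (carrier G)"
  shows "poly_ccc G"
proof -
  have "\<exists>Ps. \<forall>n. ((\<exists>m D. equipartition (Ps n) m D) \<and> ball n \<subseteq> block_at (Ps n) \<one>)
      \<and> finer (Ps n) (Ps (Suc n))"
  proof (rule dependent_nat_choice)
    have "ball 0 \<subseteq> block_at ((\<lambda>g. {g}) ` carrier G) \<one>"
      using equipartition_block_at_eq[OF equipartition_singletons] unfolding ball_def by auto
    then show "\<exists>P. (\<exists>m D. equipartition P m D) \<and> ball 0 \<subseteq> block_at P \<one>"
      using equipartition_singletons by blast
  next
    fix P n assume "(\<exists>m D. equipartition P m D) \<and> ball n \<subseteq> block_at P \<one>"
    then show "\<exists>P'. ((\<exists>m D. equipartition P' m D) \<and> ball (Suc n) \<subseteq> block_at P' \<one>)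
        \<and> finer P P'"
      using exists_coarser_equipartition[OF assms] by blast
  qed
  then obtain Ps where Ps: "\<And>n. \<exists>m D. equipartition (Ps n) m D"
    "\<And>n. ball n \<subseteq> block_at (Ps n) \<one>" "\<And>n. finer (Ps n) (Ps (Suc n))"
    by blast
  have "\<forall>n. \<exists>k \<Delta> T. fair_polytiling G k \<Delta> T \<and> induced_partition G k \<Delta> T = Ps n
      \<and> \<one> \<in> \<Delta> 0 \<and> T 0 = block_at (Ps n) \<one>"
    using Ps(1) fair_polytiling_of_equipartition by blast
  then obtain k \<Delta> T where tiling: "\<forall>n. fair_polytiling G (k n) (\<Delta> n) (T n)
      \<and> induced_partition G (k n) (\<Delta> n) (T n) = Ps n \<and> \<one> \<in> \<Delta> n 0 \<and> T n 0 = block_at (Ps n) \<one>"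
    by (auto dest!: choice)
  have "T n 0 \<subseteq> T (Suc n) 0" for n
  proof -
    obtain m D m' D' where "equipartition (Ps n) m D" "equipartition (Ps (Suc n)) m' D'"
      using Ps(1) by blast
    then show ?thesis
      using block_at_mono[OF _ _ Ps(3) one_closed] tiling by simp
  qed
  moreover have "(\<Union>n. T n 0) = carrier G"
  proof
    have "T n 0 \<subseteq> carrier G" for n
    proof -
      obtain m D where "equipartition (Ps n) m D"
        using Ps(1) by blast
      then show ?thesis
        using equipartition_block(1) equipartition_block_at(1)[OF _ one_closed] tiling by simp
    qed
    then show "(\<Union>n. T n 0) \<subseteq> carrier G"
      by blast
    show "carrier G \<subseteq> (\<Union>n. T n 0)"
    proof
      fix g assume "g \<in> carrier G"
      then obtain n where "g \<in> ball n"
        using connected by blast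
      then have "g \<in> T n 0"
        using Ps(2)[of n] tiling by auto
      then show "g \<in> (\<Union>n. T n 0)"
        by blast
    qed
  qed
  ultimately show ?thesis
    unfolding poly_ccc_def using countable_carrier tiling Ps(3)
    by (intro conjI exI[of _ k] exI[of _ \<Delta>] exI[of _ T]) simp_all
qed

lemma (in group) poly_ccc_if_finite:
  assumes "finite (carrier G)"
  shows "poly_ccc G"
proof -
  have "fair_polytiling G 1 (\<lambda>i. {\<one>}) (\<lambda>i. carrier G)"
    unfolding fair_polytiling_def polytiling_def using assms lcos_mult_one by auto
  moreover have "induced_partition G 1 (\<lambda>i. {\<one>}) (\<lambda>i. carrier G) = {carrier G}"
    unfolding induced_partition_def using lcos_mult_one by auto
  ultimately show ?thesis
    unfolding poly_ccc_def finer_def using assms countable_finite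
    by (intro conjI exI[of _ "\<lambda>n. 1"] exI[of _ "\<lambda>n i. {\<one>}"] exI[of _ "\<lambda>n i. carrier G"]) auto
qed

lemma (in group) cayley_graph_of_generators:
  assumes "finite S" and "S \<subseteq> carrier G" and "generate G S = carrier G"
  shows "cayley_graph G (S \<union> (\<lambda>s. inv s) ` S \<union> {\<one>})"
proof
  show "S \<union> (\<lambda>s. inv s) ` S \<union> {\<one>} \<subseteq> carrier G" "finite (S \<union> (\<lambda>s. inv s) ` S \<union> {\<one>})"
    "\<one> \<in> S \<union> (\<lambda>s. inv s) ` S \<union> {\<one>}"
    using assms(1,2) by auto
  show "inv u \<in> S \<union> (\<lambda>s. inv s) ` S \<union> {\<one>}" if "u \<in> S \<union> (\<lambda>s. inv s) ` S \<union> {\<one>}" for u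
    using that assms(2) by auto
  have "generate G S \<subseteq> generate G (S \<union> (\<lambda>s. inv s) ` S \<union> {\<one>})"
    by (intro mono_generate) blast
  moreover have "generate G (S \<union> (\<lambda>s. inv s) ` S \<union> {\<one>}) \<subseteq> carrier G"
    using assms(2) by (intro generate_incl) auto
  ultimately show "generate G (S \<union> (\<lambda>s. inv s) ` S \<union> {\<one>}) = carrier G"
    using assms(3) by blast
qed

theorem theorem6p1:
  fixes G :: "('a, 'b) monoid_scheme"
  assumes "group G" and "finitely_generated G"
  shows "poly_ccc G"
proof -
  interpret group G
    by fact
  obtain S where "finite S" "S \<subseteq> carrier G" "generate G S = carrier G"
    using assms(2) unfolding finitely_generated_def by blast
  then interpret cayley_graph G "S \<union> (\<lambda>s. inv\<^bsub>G\<^esub> s) ` S \<union> {\<one>\<^bsub>G\<^esub>}"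
    by (rule cayley_graph_of_generators)
  show ?thesis
    using poly_ccc_if_finite poly_ccc_if_infinite by blast
qed

end
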